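(* Let $\Gamma$ be a countable digraph such that (C1) ${\rm desc}(u)\cong\Gamma$ for all $u\in\Gamma$, and (C2) for every finitely generated descendant-closed subdigraph $X$ of $\Gamma$, the subgroup of ${\rm Aut}(X)$ of automorphisms extending to automorphisms of $\Gamma$ has countable index in ${\rm Aut}(X)$. Let $\mathcal C_\Gamma$ be the class of digraphs $A$ such that (D1) ${\rm desc}(a)\cong\Gamma$ for all $a\in A$, (D2) $A$ is finitely generated, and (D3) ${\rm desc}(a)\cap{\rm desc}(b)$ is finitely generated for all $a,b\in A$. Then for every $A\in\mathcal C_\Gamma$ there are only countably many isomorphism types of $\le$-embeddings $f:A\to B$ with $B\in\mathcal C_\Gamma$.
   Context: Subdigraphs are full induced subdigraphs. For a digraph, an $s$-arc ($s\ge0$) from $u_0$ to $u_s$ is a sequence $u_0\ldots u_s$ with each $(u_i,u_{i+1})$ a directed edge and $u_{i-1}\ne u_{i+1}$ for $0<i<s$; ${\rm desc}(u)$ is the set of vertices reachable from $u$ by an $s$-arc for some $s\ge0$ (as an induced subdigraph), and ${\rm desc}(Y)=\bigcup_{y\in Y}{\rm desc}(y)$. $A\le B$ (descendant-closed) means ${\rm desc}_B(a)\subseteq A$ for all $a\in A$; a descendant-closed set (or a digraph) is finitely generated if it equals ${\rm desc}(Z)$ for some finite set $Z$ of its vertices. A $\le$-embedding is an embedding $f:A\to B$ onto an induced subdigraph with $f(A)\le B$. Two $\le$-embeddings $f_1:A\to B_1$, $f_2:A\to B_2$ are isomorphic if there is an isomorphism $h:B_1\to B_2$ with $f_2=h\circ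 f_1$; isomorphism types are counted with respect to this relation, with $B$ varying over $\mathcal C_\Gamma$. *)

theory Defs
  imports Main "HOL-Library.Countable_Set"
begin

record 'a digraph =
  verts :: "'a set"
  arcs  :: "('a \<times> 'a) set"

definition wf_digraph :: "('a, 'm) digraph_scheme \<Rightarrow> bool" where
  "wf_digraph G \<longleftrightarrow> arcs G \<subseteq> verts G \<times> verts G \<and> (\<forall>x. (x, x) \<notin> arcs G)"

definition induced :: "'a digraph \<Rightarrow> 'a set \<Rightarrow> 'a digraph" where
  "induced G S = \<lparr>verts = S \<inter> verts G, arcs = arcs G \<inter> (S \<times> S)\<rparr>"

definition s_arc :: "'a digraph \<Rightarrow> 'a list \<Rightarrow> bool" where
  "s_arc G p \<longleftrightarrow> p \<noteq> [] \<and> set p \<subseteq> verts G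
     \<and> (\<forall>i. Suc i < length p \<longrightarrow> (p ! i, p ! Suc i) \<in> arcs G)
     \<and> (\<forall>i. 0 < i \<and> Suc i < length p \<longrightarrow> p ! (i - 1) \<noteq> p ! Suc i)"

definition desc :: "'a digraph \<Rightarrow> 'a \<Rightarrow> 'a set" where
  "desc G u = {last p | p. s_arc G p \<and> hd p = u}"

definition desc_set :: "'a digraph \<Rightarrow> 'a set \<Rightarrow> 'a set" where
  "desc_set G Y = (\<Union>y\<in>Y. desc G y)"

definition desc_closed :: "'a digraph \<Rightarrow> 'a set \<Rightarrow> bool" where
  "desc_closed G A \<longleftrightarrow> A \<subseteq> verts G \<and> (\<forall>a\<in>A. desc G a \<subseteq> A)"

definition fg_set :: "'a digraph \<Rightarrow> 'a set \<Rightarrow> bool" where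
  "fg_set G A \<longleftrightarrow> (\<exists>Z. finite Z \<and> Z \<subseteq> A \<and> A = desc_set G Z)"

definition fg_digraph :: "'a digraph \<Rightarrow> bool" where
  "fg_digraph G \<longleftrightarrow> fg_set G (verts G)"

definition iso_map :: "'a digraph \<Rightarrow> 'b digraph \<Rightarrow> ('a \<Rightarrow> 'b) \<Rightarrow> bool" where
  "iso_map G H h \<longleftrightarrow> bij_betw h (verts G) (verts H)
     \<and> (\<forall>x\<in>verts G. \<forall>y\<in>verts G. (x, y) \<in> arcs G \<longleftrightarrow> (h x, h y) \<in> arcs H)"

definition isomorphic :: "'a digraph \<Rightarrow> 'b digraph \<Rightarrow> bool" where
  "isomorphic G H \<longleftrightarrow> (\<exists>h. iso_map G H h)"

definition Aut :: "'a digraph \<Rightarrow> ('a \<Rightarrow> 'a) set" where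
  "Aut X = {h. iso_map X X h \<and> (\<forall>x. x \<notin> verts X \<longrightarrow> h x = x)}"

definition ext_auts :: "'a digraph \<Rightarrow> 'a set \<Rightarrow> ('a \<Rightarrow> 'a) set" where
  "ext_auts G X = {h \<in> Aut (induced G X). \<exists>g\<in>Aut G. \<forall>x\<in>X. g x = h x}"

definition left_cosets :: "'a digraph \<Rightarrow> ('a \<Rightarrow> 'a) set \<Rightarrow> ('a \<Rightarrow> 'a) set set" where
  "left_cosets X K = {(\<lambda>k. h \<circ> k) ` K | h. h \<in> Aut X}"

definition in_C :: "'a digraph \<Rightarrow> 'b digraph \<Rightarrow> bool" where
  "in_C \<Gamma> A \<longleftrightarrow> wf_digraph A
     \<and> (\<forall>a\<in>verts A. isomorphic (induced A (desc A a)) \<Gamma>)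
     \<and> fg_digraph A
     \<and> (\<forall>a\<in>verts A. \<forall>b\<in>verts A. fg_digraph (induced A (desc A a \<inter> desc A b)))"

definition le_embedding :: "('c \<Rightarrow> 'b) \<Rightarrow> 'c digraph \<Rightarrow> 'b digraph \<Rightarrow> bool" where
  "le_embedding f A B \<longleftrightarrow> inj_on f (verts A) \<and> f ` verts A \<subseteq> verts B
     \<and> (\<forall>x\<in>verts A. \<forall>y\<in>verts A. (x, y) \<in> arcs A \<longleftrightarrow> (f x, f y) \<in> arcs B)
     \<and> desc_closed B (f ` verts A)"

definition emb_iso :: "'c digraph \<Rightarrow> ('c \<Rightarrow> 'b) \<times> 'b digraph \<Rightarrow> ('c \<Rightarrow> 'b) \<times> 'b digraph \<Rightarrow> bool" where
  "emb_iso A e1 e2 \<longleftrightarrow> (\<exists>h. iso_map (snd e1) (snd e2) h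
       \<and> (\<forall>x\<in>verts A. fst e2 x = h (fst e1 x)))"

end

theory Submission
  imports Defs
begin

text \<open>Every \<open>\<le>\<close>-embedding \<open>f : A \<rightarrow> B\<close> with \<open>B \<in> \<C>\<^sub>\<Gamma>\<close> is obtained from \<open>f : A \<rightarrow> B|f(A)\<close> by adding
  the descendant sets of finitely many vertices of \<open>B\<close> one at a time, so it suffices to show, by
  induction on \<open>k\<close>, that the embeddings cut down to \<open>f(A) \<union> desc(Z)\<close> with \<open>|Z| = k\<close> fall into
  countably many isomorphism classes. Adding one vertex \<open>b\<close> to such a \<open>D\<close> is determined up to
  isomorphism by the class of \<open>(f, B|D)\<close>, by the overlap \<open>desc(b) \<inter> D\<close> viewed inside \<open>\<Gamma> \<cong> desc(b)\<close>
  and inside a representative of that class, and by a coset of the automorphisms of the overlap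
  that extend to \<open>\<Gamma>\<close>. By (D3) the overlap is finitely generated, so there are countably many
  choices for each of these data, the last by (C2); two extensions with the same data are
  isomorphic by gluing the isomorphism of the \<open>D\<close>-parts to an automorphism of \<open>\<Gamma>\<close> on \<open>desc(b)\<close>.\<close>

lemma verts_induced [simp]: "verts (induced G S) = S \<inter> verts G"
  by (simp add: induced_def)

lemma arcs_induced [simp]: "arcs (induced G S) = arcs G \<inter> (S \<times> S)"
  by (simp add: induced_def)

lemma induced_self: "wf_digraph G \<Longrightarrow> induced G (verts G) = G"
  unfolding induced_def wf_digraph_def by (cases G) auto

lemma desc_subset_verts: "desc G u \<subseteq> verts G"
  unfolding desc_def s_arc_def by (auto intro!: last_in_set dest!: subsetD)

lemma desc_set_subset_verts: "desc_set G Z \<subseteq> verts G"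
  unfolding desc_set_def by (simp add: UN_least desc_subset_verts)

lemma self_in_desc: "u \<in> verts G \<Longrightarrow> u \<in> desc G u"
  unfolding desc_def s_arc_def by (rule CollectI, rule exI[of _ "[u]"]) auto

lemma subset_desc_set: "Z \<subseteq> verts G \<Longrightarrow> Z \<subseteq> desc_set G Z"
  unfolding desc_set_def by (auto intro: self_in_desc)

lemma desc_set_insert: "desc_set G (insert b Z) = desc G b \<union> desc_set G Z"
  unfolding desc_set_def by simp

lemma desc_set_UN: "desc_set G (\<Union>i\<in>I. Z i) = (\<Union>i\<in>I. desc_set G (Z i))"
  unfolding desc_set_def by blast

lemma s_arc_mem_desc:
  assumes "s_arc G p" "x \<in> set p"
  shows "x \<in> desc G (hd p)"
proof -
  obtain i where i: "i < length p" "p ! i = x"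
    using assms(2) by (auto simp: in_set_conv_nth)
  have "s_arc G (take (Suc i) p)"
    using assms(1) unfolding s_arc_def by (auto dest: in_set_takeD)
  moreover have "last (take (Suc i) p) = x"
    using i by (simp add: take_Suc_conv_app_nth)
  moreover have "hd (take (Suc i) p) = hd p"
    using i by (cases p) auto
  ultimately show ?thesis unfolding desc_def by blast
qed

lemma s_arc_snoc:
  assumes p: "s_arc G p" and y: "y \<in> verts G" and a: "(last p, y) \<in> arcs G"
    and no_return: "2 \<le> length p \<Longrightarrow> p ! (length p - 2) \<noteq> y"
  shows "s_arc G (p @ [y])"
proof -
  have ne: "p \<noteq> []" using p unfolding s_arc_def by blast
  have lst: "p ! (length p - 1) = last p" using ne by (simp add: last_conv_nth)
  have "((p @ [y]) ! i, (p @ [y]) ! Suc i) \<in> arcs G" if i: "Suc i < length (p @ [y])" for i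
  proof (cases "Suc i < length p")
    case True
    then show ?thesis using p unfolding s_arc_def by (simp add: nth_append)
  next
    case False
    then have "i = length p - 1" using i by simp
    then show ?thesis using a lst ne by (simp add: nth_append)
  qed
  moreover have "(p @ [y]) ! (i - 1) \<noteq> (p @ [y]) ! Suc i"
    if i: "0 < i" "Suc i < length (p @ [y])" for i
  proof (cases "Suc i < length p")
    case True
    then show ?thesis using p i unfolding s_arc_def by (auto simp: nth_append)
  next
    case False
    then have "2 \<le> length p" "i - 1 = length p - 2" "Suc i = length p" using i by auto
    then show ?thesis using no_return by (simp add: nth_append)
  qed
  ultimately show ?thesis using p y unfolding s_arc_def by auto
qed

text \<open>Appending an arc to an s-arc fails to give an s-arc only when it immediately reverses
  the last arc, and then the new endpoint already lies on the s-arc.\<close>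
lemma desc_arc:
  assumes wf: "wf_digraph G" and x: "x \<in> desc G u" and a: "(x, y) \<in> arcs G"
  shows "y \<in> desc G u"
proof -
  obtain p where p: "s_arc G p" "hd p = u" "last p = x"
    using x unfolding desc_def by blast
  show ?thesis
  proof (cases "2 \<le> length p \<and> p ! (length p - 2) = y")
    case True
    then have "length p - 2 < length p" by linarith
    with True have "y \<in> set p" by (metis nth_mem)
    then show ?thesis using s_arc_mem_desc[OF p(1)] p(2) by blast
  next
    case False
    have "y \<in> verts G" using wf a unfolding wf_digraph_def by auto
    then have "s_arc G (p @ [y])" using s_arc_snoc[OF p(1)] a p(3) False by blast
    moreover have "hd (p @ [y]) = u" "last (p @ [y]) = y"
      using p(1,2) unfolding s_arc_def by auto
    ultimately show ?thesis unfolding desc_def by (intro CollectI exI[of _ "p @ [y]"]) simp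
  qed
qed

lemma arc_closed_desc_subset:
  assumes closed: "\<forall>x\<in>S. \<forall>y. (x, y) \<in> arcs G \<longrightarrow> y \<in> S" and a: "a \<in> S"
  shows "desc G a \<subseteq> S"
proof
  fix x assume "x \<in> desc G a"
  then obtain p where p: "s_arc G p" "hd p = a" "last p = x" unfolding desc_def by blast
  have "p ! i \<in> S" if "i < length p" for i
    using that
  proof (induction i)
    case 0
    then show ?case using p(2) a by (simp add: hd_conv_nth)
  next
    case (Suc i)
    then have "(p ! i, p ! Suc i) \<in> arcs G" using p(1) unfolding s_arc_def by blast
    then show ?case using Suc closed by simp
  qed
  moreover have "p \<noteq> []" using p(1) unfolding s_arc_def by blast
  then have "length p - 1 < length p" "last p = p ! (length p - 1)"
    by (auto simp: last_conv_nth)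
  ultimately show "x \<in> S" using p(3) by metis
qed

lemma desc_closed_desc:
  assumes "wf_digraph G"
  shows "desc_closed G (desc G u)"
  unfolding desc_closed_def
proof (intro conjI ballI)
  show "desc G u \<subseteq> verts G" by (rule desc_subset_verts)
  fix a assume "a \<in> desc G u"
  then show "desc G a \<subseteq> desc G u"
    by (rule arc_closed_desc_subset[rotated]) (auto intro: desc_arc[OF assms])
qed

lemma desc_closed_desc_set:
  assumes "wf_digraph G"
  shows "desc_closed G (desc_set G Z)"
  unfolding desc_closed_def
proof (intro conjI ballI)
  show "desc_set G Z \<subseteq> verts G" by (rule desc_set_subset_verts)
  fix a assume "a \<in> desc_set G Z"
  then obtain z where "z \<in> Z" "a \<in> desc G z" unfolding desc_set_def by blast
  then show "desc G a \<subseteq> desc_set G Z"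
    using desc_closed_desc[OF assms, of z] unfolding desc_closed_def desc_set_def by blast
qed

lemma desc_closed_arc:
  assumes "wf_digraph G" "desc_closed G S" "x \<in> S" "(x, y) \<in> arcs G"
  shows "y \<in> S"
proof -
  have S: "S \<subseteq> verts G" "desc G x \<subseteq> S" using assms(2,3) unfolding desc_closed_def by auto
  have "x \<in> desc G x" using S(1) assms(3) by (intro self_in_desc) auto
  then have "y \<in> desc G x" by (rule desc_arc[OF assms(1) _ assms(4)])
  then show ?thesis using S(2) by auto
qed

lemma s_arc_induced_iff: "s_arc (induced G S) p \<longleftrightarrow> s_arc G p \<and> set p \<subseteq> S"
proof
  assume "s_arc (induced G S) p"
  then show "s_arc G p \<and> set p \<subseteq> S" unfolding s_arc_def by auto
next
  assume p: "s_arc G p \<and> set p \<subseteq> S"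
  then have "p ! i \<in> S \<and> p ! Suc i \<in> S" if "Suc i < length p" for i
    using that by (meson Suc_lessD nth_mem subsetD)
  with p show "s_arc (induced G S) p" unfolding s_arc_def by simp
qed

lemma desc_induced:
  assumes S: "desc_closed G S" and x: "x \<in> S"
  shows "desc (induced G S) x = desc G x"
proof -
  have "set p \<subseteq> S" if "s_arc G p" "hd p = x" for p
    using s_arc_mem_desc[OF that(1)] that(2) S x unfolding desc_closed_def by blast
  then show ?thesis unfolding desc_def s_arc_induced_iff by blast
qed

lemma desc_set_induced:
  "desc_closed G S \<Longrightarrow> Z \<subseteq> S \<Longrightarrow> desc_set (induced G S) Z = desc_set G Z"
  unfolding desc_set_def by (simp add: desc_induced subset_iff)

lemma induced_induced: "induced (induced G S) T = induced G (T \<inter> S)"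
  unfolding induced_def by auto

lemma desc_closed_Int_verts: "desc_closed G S \<Longrightarrow> S \<inter> verts G = S"
  unfolding desc_closed_def by blast

lemma iso_mapD:
  assumes "iso_map G H h"
  shows "bij_betw h (verts G) (verts H)" "inj_on h (verts G)" "h ` verts G = verts H"
    "\<And>x y. x \<in> verts G \<Longrightarrow> y \<in> verts G \<Longrightarrow> (x, y) \<in> arcs G \<longleftrightarrow> (h x, h y) \<in> arcs H"
  using assms unfolding iso_map_def bij_betw_def by auto

lemma iso_map_inv:
  assumes iso: "iso_map G H h"
  shows "iso_map H G (inv_into (verts G) h)"
proof -
  have b: "bij_betw (inv_into (verts G) h) (verts H) (verts G)"
    using iso_mapD(1)[OF iso] by (rule bij_betw_inv_into)
  have "\<forall>x\<in>verts H. \<forall>y\<in>verts H. (x, y) \<in> arcs H \<longleftrightarrow>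
        (inv_into (verts G) h x, inv_into (verts G) h y) \<in> arcs G"
  proof (intro ballI)
    fix x y assume x: "x \<in> verts H" and y: "y \<in> verts H"
    have ix: "inv_into (verts G) h x \<in> verts G" and iy: "inv_into (verts G) h y \<in> verts G"
      using x y iso_mapD(3)[OF iso] by (auto intro: inv_into_into)
    have hx: "h (inv_into (verts G) h x) = x" and hy: "h (inv_into (verts G) h y) = y"
      using x y iso_mapD(3)[OF iso] by (auto intro: f_inv_into_f)
    show "(x, y) \<in> arcs H \<longleftrightarrow> (inv_into (verts G) h x, inv_into (verts G) h y) \<in> arcs G"
      using iso_mapD(4)[OF iso ix iy] hx hy by simp
  qed
  then show ?thesis using b unfolding iso_map_def by blast
qed

lemma iso_map_comp:
  assumes 1: "iso_map G H h" and 2: "iso_map H K k"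
  shows "iso_map G K (k \<circ> h)"
proof -
  have b: "bij_betw (k \<circ> h) (verts G) (verts K)"
    using bij_betw_trans iso_mapD(1)[OF 1] iso_mapD(1)[OF 2] by blast
  have "\<forall>x\<in>verts G. \<forall>y\<in>verts G. (x, y) \<in> arcs G \<longleftrightarrow> ((k \<circ> h) x, (k \<circ> h) y) \<in> arcs K"
  proof (intro ballI)
    fix x y assume x: "x \<in> verts G" and y: "y \<in> verts G"
    have "h x \<in> verts H" "h y \<in> verts H" using x y iso_mapD(3)[OF 1] by auto
    then show "(x, y) \<in> arcs G \<longleftrightarrow> ((k \<circ> h) x, (k \<circ> h) y) \<in> arcs K"
      using iso_mapD(4)[OF 1 x y] iso_mapD(4)[OF 2] by simp
  qed
  then show ?thesis using b unfolding iso_map_def by blast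
qed

lemma iso_map_cong:
  assumes "iso_map G H h" "\<And>x. x \<in> verts G \<Longrightarrow> h x = k x"
  shows "iso_map G H k"
proof -
  have "bij_betw k (verts G) (verts H)" using iso_mapD(1)[OF assms(1)] assms(2)
    using bij_betw_cong by blast
  moreover have "\<forall>x\<in>verts G. \<forall>y\<in>verts G. (x, y) \<in> arcs G \<longleftrightarrow> (k x, k y) \<in> arcs H"
    using iso_mapD(4)[OF assms(1)] assms(2) by simp
  ultimately show ?thesis unfolding iso_map_def by blast
qed

lemma iso_map_restrict:
  assumes iso: "iso_map G H h" and S: "S \<subseteq> verts G"
  shows "iso_map (induced G S) (induced H (h ` S)) h"
proof -
  have i: "inj_on h (verts G)" and im: "h ` verts G = verts H" using iso_mapD[OF iso] by auto
  have "h ` S \<subseteq> verts H" using S im by blast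
  then have "bij_betw h (S \<inter> verts G) (h ` S \<inter> verts H)"
    using S inj_on_subset[OF i S] unfolding bij_betw_def
    by (simp add: Int_absorb2)
  moreover have "\<forall>x\<in>S \<inter> verts G. \<forall>y\<in>S \<inter> verts G.
      (x, y) \<in> arcs G \<inter> S \<times> S \<longleftrightarrow> (h x, h y) \<in> arcs H \<inter> h ` S \<times> h ` S"
    using iso_mapD(4)[OF iso] by auto
  ultimately show ?thesis unfolding iso_map_def by simp
qed

lemma s_arc_map:
  assumes iso: "iso_map G H h" and p: "s_arc G p"
  shows "s_arc H (map h p)"
proof -
  have ne: "p \<noteq> []" and sv: "set p \<subseteq> verts G"
    and ar: "\<forall>i. Suc i < length p \<longrightarrow> (p ! i, p ! Suc i) \<in> arcs G"
    and nb: "\<forall>i. 0 < i \<and> Suc i < length p \<longrightarrow> p ! (i - 1) \<noteq> p ! Suc i"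
    using p unfolding s_arc_def by blast+
  have inj: "inj_on h (verts G)" and im: "h ` verts G = verts H" using iso_mapD[OF iso] by auto
  have nth: "\<And>i. i < length p \<Longrightarrow> p ! i \<in> verts G" using sv nth_mem by blast
  have 1: "set (map h p) \<subseteq> verts H" using sv im by auto
  have 2: "\<forall>i. Suc i < length (map h p) \<longrightarrow> (map h p ! i, map h p ! Suc i) \<in> arcs H"
  proof (intro allI impI)
    fix i assume i: "Suc i < length (map h p)"
    then have "(p ! i, p ! Suc i) \<in> arcs G" using ar by simp
    then show "(map h p ! i, map h p ! Suc i) \<in> arcs H"
      using iso_mapD(4)[OF iso nth nth] i by simp
  qed
  have 3: "\<forall>i. 0 < i \<and> Suc i < length (map h p) \<longrightarrow> map h p ! (i - 1) \<noteq> map h p ! Suc i"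
  proof (intro allI impI)
    fix i assume i: "0 < i \<and> Suc i < length (map h p)"
    then have "p ! (i - 1) \<noteq> p ! Suc i" using nb by simp
    moreover have "p ! (i - 1) \<in> verts G" "p ! Suc i \<in> verts G" using i nth by auto
    ultimately have "h (p ! (i - 1)) \<noteq> h (p ! Suc i)" using inj_onD[OF inj] by blast
    moreover have "i - 1 < length p" using i by (simp, arith)
    ultimately show "map h p ! (i - 1) \<noteq> map h p ! Suc i" using i by simp
  qed
  show ?thesis unfolding s_arc_def using ne 1 2 3 by simp
qed

lemma desc_iso_subset:
  assumes iso: "iso_map G H h"
  shows "h ` desc G x \<subseteq> desc H (h x)"
proof
  fix y assume "y \<in> h ` desc G x"
  then obtain z where z: "z \<in> desc G x" "y = h z" by blast
  then obtain p where p: "s_arc G p" "hd p = x" "last p = z" unfolding desc_def by blast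
  have ne: "p \<noteq> []" using p(1) unfolding s_arc_def by blast
  have "s_arc H (map h p)" by (rule s_arc_map[OF iso p(1)])
  moreover have "hd (map h p) = h x" "last (map h p) = y" using ne p z by (auto simp: hd_map last_map)
  ultimately show "y \<in> desc H (h x)" unfolding desc_def by blast
qed

lemma desc_iso:
  assumes iso: "iso_map G H h" and x: "x \<in> verts G"
  shows "h ` desc G x = desc H (h x)"
proof
  show "h ` desc G x \<subseteq> desc H (h x)" by (rule desc_iso_subset[OF iso])
next
  let ?g = "inv_into (verts G) h"
  have iso2: "iso_map H G ?g" by (rule iso_map_inv[OF iso])
  have gx: "?g (h x) = x" using x iso_mapD(2)[OF iso] by (simp add: inv_into_f_f)
  have "?g ` desc H (h x) \<subseteq> desc G x" using desc_iso_subset[OF iso2, of "h x"] gx by simp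
  then have "h ` ?g ` desc H (h x) \<subseteq> h ` desc G x" by blast
  moreover have "h ` ?g ` desc H (h x) = desc H (h x)"
  proof -
    have "\<And>y. y \<in> desc H (h x) \<Longrightarrow> h (?g y) = y"
    proof -
      fix y assume "y \<in> desc H (h x)"
      then have "y \<in> h ` verts G" using desc_subset_verts[of H] iso_mapD(3)[OF iso] by blast
      then show "h (?g y) = y" by (rule f_inv_into_f)
    qed
    then show ?thesis by (simp add: image_image cong: image_cong)
  qed
  ultimately show "desc H (h x) \<subseteq> h ` desc G x" by simp
qed

lemma desc_set_iso:
  assumes iso: "iso_map G H h" and Z: "Z \<subseteq> verts G"
  shows "h ` desc_set G Z = desc_set H (h ` Z)"
proof -
  have "h ` desc_set G Z = (\<Union>z\<in>Z. h ` desc G z)" unfolding desc_set_def by blast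
  also have "\<dots> = (\<Union>z\<in>Z. desc H (h z))" using desc_iso[OF iso] Z by (simp add: subset_iff)
  also have "\<dots> = desc_set H (h ` Z)" unfolding desc_set_def by blast
  finally show ?thesis .
qed

lemma iso_map_vimage:
  assumes "iso_map G H h"
  shows "{x \<in> verts G. h x \<in> T} = inv_into (verts G) h ` (T \<inter> verts H)"
proof -
  have i: "inj_on h (verts G)" and im: "h ` verts G = verts H" using iso_mapD(2,3)[OF assms] .
  show ?thesis
  proof (intro equalityI subsetI)
    fix x assume "x \<in> {x \<in> verts G. h x \<in> T}"
    then show "x \<in> inv_into (verts G) h ` (T \<inter> verts H)"
      using i im by (auto intro!: image_eqI[of _ _ "h x"] simp: inv_into_f_f)
  next
    fix x assume "x \<in> inv_into (verts G) h ` (T \<inter> verts H)"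
    then show "x \<in> {x \<in> verts G. h x \<in> T}"
      using im by (auto simp: inv_into_into f_inv_into_f)
  qed
qed

lemma le_embedding_iso_map:
  assumes "le_embedding f A B"
  shows "iso_map A (induced B (f ` verts A)) f"
  using assms unfolding le_embedding_def iso_map_def bij_betw_def by auto

lemma fg_set_desc_set: "finite Z \<Longrightarrow> Z \<subseteq> verts G \<Longrightarrow> fg_set G (desc_set G Z)"
  unfolding fg_set_def using subset_desc_set by blast

lemma fg_set_subset_verts: "fg_set G S \<Longrightarrow> S \<subseteq> verts G"
  unfolding fg_set_def using desc_set_subset_verts by metis

lemma fg_set_desc_closed: "wf_digraph G \<Longrightarrow> fg_set G S \<Longrightarrow> desc_closed G S"
  unfolding fg_set_def using desc_closed_desc_set by metis

lemma fg_set_UN: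
  assumes I: "finite I" and S: "\<And>i. i \<in> I \<Longrightarrow> fg_set G (S i)"
  shows "fg_set G (\<Union>i\<in>I. S i)"
proof -
  obtain Z where Z: "\<And>i. i \<in> I \<Longrightarrow> finite (Z i) \<and> Z i \<subseteq> S i \<and> S i = desc_set G (Z i)"
    using S unfolding fg_set_def by metis
  then have "(\<Union>i\<in>I. S i) = desc_set G (\<Union>i\<in>I. Z i)" by (simp add: desc_set_UN)
  moreover have "finite (\<Union>i\<in>I. Z i)" "(\<Union>i\<in>I. Z i) \<subseteq> (\<Union>i\<in>I. S i)" using I Z by blast+
  ultimately show ?thesis unfolding fg_set_def by blast
qed

lemma fg_set_induced_iff:
  assumes "desc_closed G E" "S \<subseteq> E"
  shows "fg_set (induced G E) S \<longleftrightarrow> fg_set G S"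
  unfolding fg_set_def using desc_set_induced[OF assms(1)] assms(2) by (metis subset_trans)

lemma fg_set_iso_image:
  assumes h: "iso_map G H h" and S: "fg_set G S"
  shows "fg_set H (h ` S)"
proof -
  obtain Z where Z: "finite Z" "Z \<subseteq> S" "S = desc_set G Z" using S unfolding fg_set_def by blast
  have "S \<subseteq> verts G" unfolding Z(3) by (rule desc_set_subset_verts)
  with Z(2) have "Z \<subseteq> verts G" by (rule subset_trans)
  then have "h ` S = desc_set H (h ` Z)" using desc_set_iso[OF h] Z(3) by simp
  then show ?thesis unfolding fg_set_def using Z(1,2) by blast
qed

lemma countable_fg_sets:
  assumes "countable (verts G)"
  shows "countable {S. fg_set G S}"
proof (rule countable_subset)
  show "{S. fg_set G S} \<subseteq> desc_set G ` {Z. finite Z \<and> Z \<subseteq> verts G}"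
  proof
    fix S assume "S \<in> {S. fg_set G S}"
    then obtain Z where Z: "finite Z" "Z \<subseteq> S" "S = desc_set G Z" unfolding fg_set_def by blast
    moreover have "S \<subseteq> verts G" unfolding Z(3) by (rule desc_set_subset_verts)
    ultimately show "S \<in> desc_set G ` {Z. finite Z \<and> Z \<subseteq> verts G}" by blast
  qed
  show "countable (desc_set G ` {Z. finite Z \<and> Z \<subseteq> verts G})"
    using countable_Collect_finite_subset[OF assms] by blast
qed

lemma countable_verts_in_C:
  assumes cnt: "countable (verts \<Gamma>)" and C: "in_C \<Gamma> B"
  shows "countable (verts B)"
proof -
  obtain Z where Z: "finite Z" "Z \<subseteq> verts B" "verts B = desc_set B Z"
    using C unfolding in_C_def fg_digraph_def fg_set_def by blast
  have "\<And>z. z \<in> Z \<Longrightarrow> countable (desc B z)"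
  proof -
    fix z assume z: "z \<in> Z"
    then have "isomorphic (induced B (desc B z)) \<Gamma>" using C Z unfolding in_C_def by blast
    then obtain h where h: "iso_map (induced B (desc B z)) \<Gamma> h" unfolding isomorphic_def by blast
    have "desc B z \<inter> verts B = desc B z" using desc_subset_verts[of B z] by blast
    then have "bij_betw h (desc B z) (verts \<Gamma>)" using iso_mapD(1)[OF h] by simp
    then have "inj_on h (desc B z)" "h ` desc B z = verts \<Gamma>" unfolding bij_betw_def by auto
    then show "countable (desc B z)" using cnt countable_image_inj_eq by metis
  qed
  then have "countable (desc_set B Z)" unfolding desc_set_def using countable_finite[OF Z(1)] by blast
  then show ?thesis using Z(3) by simp
qed

lemma fg_set_desc_Int:
  assumes B: "in_C \<Gamma> B" and b: "b \<in> verts B" and D: "fg_set B D"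
  shows "fg_set B (desc B b \<inter> D)"
proof -
  obtain Z where Z: "finite Z" "Z \<subseteq> D" "D = desc_set B Z" using D unfolding fg_set_def by blast
  have wf: "wf_digraph B" using B unfolding in_C_def by blast
  have "fg_set B (desc B b \<inter> desc B z)" if z: "z \<in> Z" for z
  proof -
    let ?S = "desc B b \<inter> desc B z"
    have "D \<subseteq> verts B" unfolding Z(3) by (rule desc_set_subset_verts)
    then have "z \<in> verts B" using z Z(2) by blast
    then have "fg_digraph (induced B ?S)" using B b unfolding in_C_def by blast
    moreover have S: "desc_closed B ?S"
      using desc_closed_desc[OF wf, of b] desc_closed_desc[OF wf, of z] unfolding desc_closed_def by blast
    ultimately have "fg_set (induced B ?S) ?S"
      unfolding fg_digraph_def using desc_closed_Int_verts[OF S] by simp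
    then show ?thesis using fg_set_induced_iff[OF S] by blast
  qed
  then have "fg_set B (\<Union>z\<in>Z. desc B b \<inter> desc B z)" by (rule fg_set_UN[OF Z(1)])
  moreover have "(\<Union>z\<in>Z. desc B b \<inter> desc B z) = desc B b \<inter> D" unfolding Z(3) desc_set_def by blast
  ultimately show ?thesis by simp
qed

lemma fg_set_le_embedding_image:
  assumes A: "in_C \<Gamma> A" and f: "le_embedding f A B"
  shows "fg_set B (f ` verts A)"
proof -
  have "fg_set A (verts A)" using A unfolding in_C_def fg_digraph_def by blast
  then have "fg_set (induced B (f ` verts A)) (f ` verts A)"
    using fg_set_iso_image[OF le_embedding_iso_map[OF f]] by blast
  moreover have "desc_closed B (f ` verts A)" using f unfolding le_embedding_def by blast
  ultimately show ?thesis using fg_set_induced_iff by blast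
qed

lemma iso_map_inv_into_induced:
  assumes k: "iso_map (induced G1 D1) (induced G2 D2) k"
    and D1: "desc_closed G1 D1" and D2: "desc_closed G2 D2"
  shows "iso_map (induced G2 D2) (induced G1 D1) (inv_into D1 k)"
    and "\<forall>x\<in>D1. inv_into D1 k (k x) = x \<and> k x \<in> D2"
    and "\<forall>y\<in>D2. k (inv_into D1 k y) = y \<and> inv_into D1 k y \<in> D1"
proof -
  have v: "verts (induced G1 D1) = D1" "verts (induced G2 D2) = D2"
    using desc_closed_Int_verts D1 D2 by simp_all
  show "iso_map (induced G2 D2) (induced G1 D1) (inv_into D1 k)"
    using iso_map_inv[OF k] unfolding v(1) .
  show "\<forall>x\<in>D1. inv_into D1 k (k x) = x \<and> k x \<in> D2"
    "\<forall>y\<in>D2. k (inv_into D1 k y) = y \<and> inv_into D1 k y \<in> D1"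
    using iso_mapD(2,3)[OF k] unfolding v by (auto simp: inv_into_f_f f_inv_into_f inv_into_into)
qed

lemma fg_set_overlap:
  assumes B: "in_C \<Gamma> B" and b: "b \<in> verts B" and D: "fg_set B D"
    and \<phi>: "iso_map (induced B (desc B b)) \<Gamma> \<phi>" and h: "iso_map R (induced B D) h"
  shows "fg_set \<Gamma> (\<phi> ` (desc B b \<inter> D))" and "fg_set R {w \<in> verts R. h w \<in> desc B b}"
proof -
  have wf: "wf_digraph B" using B unfolding in_C_def by blast
  have S: "fg_set B (desc B b \<inter> D)" by (rule fg_set_desc_Int[OF B b D])
  then have "fg_set (induced B (desc B b)) (desc B b \<inter> D)"
    using fg_set_induced_iff[OF desc_closed_desc[OF wf]] by blast
  then show "fg_set \<Gamma> (\<phi> ` (desc B b \<inter> D))" by (rule fg_set_iso_image[OF \<phi>])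
  have D': "desc_closed B D" by (rule fg_set_desc_closed[OF wf D])
  have "{w \<in> verts R. h w \<in> desc B b} = inv_into (verts R) h ` (desc B b \<inter> D)"
    using iso_map_vimage[OF h] desc_closed_Int_verts[OF D'] by simp
  moreover have "fg_set (induced B D) (desc B b \<inter> D)" using S fg_set_induced_iff[OF D'] by blast
  ultimately show "fg_set R {w \<in> verts R. h w \<in> desc B b}"
    using fg_set_iso_image[OF iso_map_inv[OF h]] by simp
qed

lemma override_on_arcs:
  assumes wf: "wf_digraph G1"
    and D1: "desc_closed G1 D1" and E1: "desc_closed G1 E1"
    and D2: "desc_closed G2 D2" and E2: "desc_closed G2 E2"
    and k1: "iso_map (induced G1 D1) (induced G2 D2) k1"
    and k2: "iso_map (induced G1 E1) (induced G2 E2) k2"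
    and agree: "\<forall>x\<in>D1 \<inter> E1. k1 x = k2 x"
    and xy: "x \<in> D1 \<union> E1" "y \<in> D1 \<union> E1" "(x, y) \<in> arcs G1"
  shows "(override_on k2 k1 D1 x, override_on k2 k1 D1 y) \<in> arcs G2"
proof (cases "x \<in> D1")
  case True
  then have "y \<in> D1" using desc_closed_arc[OF wf D1 _ xy(3)] by blast
  then have "(k1 x, k1 y) \<in> arcs (induced G2 D2)"
    using iso_mapD(4)[OF k1] True xy(3) desc_closed_Int_verts[OF D1] by simp
  then show ?thesis using True \<open>y \<in> D1\<close> by simp
next
  case False
  then have x: "x \<in> E1" using xy(1) by blast
  then have y: "y \<in> E1" using desc_closed_arc[OF wf E1 _ xy(3)] by blast
  then have "(k2 x, k2 y) \<in> arcs (induced G2 E2)"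
    using iso_mapD(4)[OF k2] x xy(3) desc_closed_Int_verts[OF E1] by simp
  moreover have "override_on k2 k1 D1 y = k2 y" using y agree by (simp add: override_on_def)
  ultimately show ?thesis using False by simp
qed

lemma override_on_left_inverse:
  assumes k1: "\<forall>x\<in>D1. l1 (k1 x) = x \<and> k1 x \<in> D2"
    and k2: "\<forall>x\<in>E1. l2 (k2 x) = x \<and> k2 x \<in> E2"
    and agree: "\<forall>y\<in>D2 \<inter> E2. l1 y = l2 y"
    and x: "x \<in> D1 \<union> E1"
  shows "override_on l2 l1 D2 (override_on k2 k1 D1 x) = x"
  using assms by (cases "x \<in> D1"; cases "k2 x \<in> D2") (auto simp: override_on_def)

text \<open>Arcs never leave a descendant-closed set, so an arc of \<open>D1 \<union> E1\<close> lies inside \<open>D1\<close> or inside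
  \<open>E1\<close>; the hypothesis \<open>overlap\<close> says that \<open>k1\<close> maps \<open>D1 \<inter> E1\<close> onto \<open>D2 \<inter> E2\<close>.\<close>
lemma iso_map_override_on:
  assumes wf1: "wf_digraph G1" and wf2: "wf_digraph G2"
    and D1: "desc_closed G1 D1" and E1: "desc_closed G1 E1"
    and D2: "desc_closed G2 D2" and E2: "desc_closed G2 E2"
    and k1: "iso_map (induced G1 D1) (induced G2 D2) k1"
    and k2: "iso_map (induced G1 E1) (induced G2 E2) k2"
    and overlap: "\<forall>x\<in>D1. x \<in> E1 \<longleftrightarrow> k1 x \<in> E2"
    and agree: "\<forall>x\<in>D1 \<inter> E1. k1 x = k2 x"
  shows "iso_map (induced G1 (D1 \<union> E1)) (induced G2 (D2 \<union> E2)) (override_on k2 k1 D1)"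
proof -
  let ?H = "override_on k2 k1 D1"
  define l1 where "l1 = inv_into D1 k1"
  define l2 where "l2 = inv_into E1 k2"
  let ?L = "override_on l2 l1 D2"
  note l1 = iso_map_inv_into_induced[OF k1 D1 D2, folded l1_def]
    and l2 = iso_map_inv_into_induced[OF k2 E1 E2, folded l2_def]
  have agree': "\<forall>y\<in>D2 \<inter> E2. l1 y = l2 y"
  proof
    fix y assume y: "y \<in> D2 \<inter> E2"
    then have "l1 y \<in> D1 \<inter> E1" using l1(3) overlap by auto
    then have "k2 (l1 y) = y" using agree l1(3) y by auto
    then show "l1 y = l2 y" using l2(2) \<open>l1 y \<in> D1 \<inter> E1\<close> by auto
  qed
  have LH: "\<forall>x\<in>D1 \<union> E1. ?L (?H x) = x"
    using override_on_left_inverse[OF l1(2) l2(2) agree'] by blast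
  have HL: "\<forall>y\<in>D2 \<union> E2. ?H (?L y) = y"
    using override_on_left_inverse[OF l1(3) l2(3) agree] by blast
  have H_into: "?H ` (D1 \<union> E1) \<subseteq> D2 \<union> E2" using l1(2) l2(2) by (auto simp: override_on_def)
  have L_into: "?L ` (D2 \<union> E2) \<subseteq> D1 \<union> E1" using l1(3) l2(3) by (auto simp: override_on_def)
  have bij: "bij_betw ?H (D1 \<union> E1) (D2 \<union> E2)" by (rule bij_betw_byWitness[OF LH HL H_into L_into])
  have "(x, y) \<in> arcs G1 \<longleftrightarrow> (?H x, ?H y) \<in> arcs G2" if "x \<in> D1 \<union> E1" "y \<in> D1 \<union> E1" for x y
  proof
    show "(x, y) \<in> arcs G1 \<Longrightarrow> (?H x, ?H y) \<in> arcs G2"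
      by (rule override_on_arcs[OF wf1 D1 E1 D2 E2 k1 k2 agree that])
    assume a: "(?H x, ?H y) \<in> arcs G2"
    have "?H x \<in> D2 \<union> E2" "?H y \<in> D2 \<union> E2" using H_into that by blast+
    from this a have "(?L (?H x), ?L (?H y)) \<in> arcs G1"
      by (rule override_on_arcs[OF wf2 D2 E2 D1 E1 l1(1) l2(1) agree'])
    then show "(x, y) \<in> arcs G1" using LH that by simp
  qed
  moreover have "(D1 \<union> E1) \<inter> verts G1 = D1 \<union> E1" "(D2 \<union> E2) \<inter> verts G2 = D2 \<union> E2"
    using D1 E1 D2 E2 unfolding desc_closed_def by blast+
  ultimately show ?thesis using bij H_into unfolding iso_map_def by auto
qed

lemma emb_iso_sym:
  assumes e: "emb_iso A e1 e2" and v: "fst e1 ` verts A \<subseteq> verts (snd e1)"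
  shows "emb_iso A e2 e1"
proof -
  obtain h where h: "iso_map (snd e1) (snd e2) h" "\<forall>x\<in>verts A. fst e2 x = h (fst e1 x)"
    using e unfolding emb_iso_def by blast
  let ?g = "inv_into (verts (snd e1)) h"
  have "\<forall>x\<in>verts A. fst e1 x = ?g (fst e2 x)"
    using h(2) v iso_mapD(2)[OF h(1)] by (simp add: image_subset_iff inv_into_f_f)
  then show ?thesis unfolding emb_iso_def using iso_map_inv[OF h(1)] by blast
qed

lemma emb_iso_trans:
  assumes "emb_iso A e1 e2" "emb_iso A e2 e3"
  shows "emb_iso A e1 e3"
proof -
  obtain h where h: "iso_map (snd e1) (snd e2) h" "\<forall>x\<in>verts A. fst e2 x = h (fst e1 x)"
    using assms(1) unfolding emb_iso_def by blast
  obtain k where k: "iso_map (snd e2) (snd e3) k" "\<forall>x\<in>verts A. fst e3 x = k (fst e2 x)"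
    using assms(2) unfolding emb_iso_def by blast
  have "\<forall>x\<in>verts A. fst e3 x = (k \<circ> h) (fst e1 x)" using h(2) k(2) by simp
  then show ?thesis unfolding emb_iso_def using iso_map_comp[OF h(1) k(1)] by blast
qed

text \<open>An isomorphism \<open>\<theta>\<close> from \<open>R|W\<close> onto \<open>\<Gamma>|Y\<close> is recorded by the automorphism
  \<open>\<theta>\<^sub>0 \<circ> \<theta>\<^sup>-\<^sup>1\<close> of \<open>\<Gamma>|Y\<close>, for a fixed reference isomorphism \<open>\<theta>\<^sub>0\<close>; its left coset modulo
  \<open>ext_auts\<close> determines \<open>\<theta>\<close> up to automorphisms of \<open>\<Gamma>\<close>.\<close>
definition ref_iso :: "'a digraph \<Rightarrow> 'b digraph \<Rightarrow> 'a set \<Rightarrow> 'b set \<Rightarrow> 'b \<Rightarrow> 'a" where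
  "ref_iso \<Gamma> R Y W = (SOME \<theta>. iso_map (induced R W) (induced \<Gamma> Y) \<theta>)"

definition iso_to_aut :: "'a digraph \<Rightarrow> 'b digraph \<Rightarrow> 'a set \<Rightarrow> 'b set \<Rightarrow> ('b \<Rightarrow> 'a) \<Rightarrow> 'a \<Rightarrow> 'a" where
  "iso_to_aut \<Gamma> R Y W \<theta> = (\<lambda>y. if y \<in> Y then ref_iso \<Gamma> R Y W (inv_into W \<theta> y) else y)"

lemma ref_iso:
  "iso_map (induced R W) (induced \<Gamma> Y) \<theta> \<Longrightarrow> iso_map (induced R W) (induced \<Gamma> Y) (ref_iso \<Gamma> R Y W)"
  unfolding ref_iso_def by (rule someI[of "iso_map (induced R W) (induced \<Gamma> Y)"])

lemma id_ext_auts: "id \<in> ext_auts \<Gamma> Y"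
proof -
  have "id \<in> Aut X" for X :: "'a digraph" unfolding Aut_def iso_map_def by simp
  then show ?thesis unfolding ext_auts_def by (auto intro!: bexI[of _ id])
qed

lemma iso_to_aut_left_coset:
  assumes \<theta>: "iso_map (induced R W) (induced \<Gamma> Y) \<theta>" and W: "W \<subseteq> verts R" and Y: "Y \<subseteq> verts \<Gamma>"
  shows "(\<lambda>k. iso_to_aut \<Gamma> R Y W \<theta> \<circ> k) ` ext_auts \<Gamma> Y \<in> left_cosets (induced \<Gamma> Y) (ext_auts \<Gamma> Y)"
proof -
  have vW: "verts (induced R W) = W" and vY: "verts (induced \<Gamma> Y) = Y" using W Y by auto
  have "iso_map (induced \<Gamma> Y) (induced \<Gamma> Y) (ref_iso \<Gamma> R Y W \<circ> inv_into W \<theta>)"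
    using iso_map_comp[OF iso_map_inv[OF \<theta>] ref_iso[OF \<theta>]] vW by simp
  then have "iso_map (induced \<Gamma> Y) (induced \<Gamma> Y) (iso_to_aut \<Gamma> R Y W \<theta>)"
    by (rule iso_map_cong) (simp add: vY iso_to_aut_def)
  then have "iso_to_aut \<Gamma> R Y W \<theta> \<in> Aut (induced \<Gamma> Y)"
    unfolding Aut_def using Y by (auto simp: vY iso_to_aut_def)
  then show ?thesis unfolding left_cosets_def by blast
qed

lemma iso_to_aut_coset_eq:
  assumes \<theta>1: "iso_map (induced R W) (induced \<Gamma> Y) \<theta>1"
    and \<theta>2: "iso_map (induced R W) (induced \<Gamma> Y) \<theta>2"
    and W: "W \<subseteq> verts R" and Y: "Y \<subseteq> verts \<Gamma>"
    and coset: "(\<lambda>k. iso_to_aut \<Gamma> R Y W \<theta>1 \<circ> k) ` ext_auts \<Gamma> Y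
              = (\<lambda>k. iso_to_aut \<Gamma> R Y W \<theta>2 \<circ> k) ` ext_auts \<Gamma> Y"
  shows "\<exists>g\<in>Aut \<Gamma>. \<forall>w\<in>W. g (\<theta>1 w) = \<theta>2 w"
proof -
  let ?\<theta>0 = "ref_iso \<Gamma> R Y W"
  let ?\<tau>1 = "iso_to_aut \<Gamma> R Y W \<theta>1" and ?\<tau>2 = "iso_to_aut \<Gamma> R Y W \<theta>2"
  have vW: "verts (induced R W) = W" and vY: "verts (induced \<Gamma> Y) = Y" using W Y by auto
  have b1: "bij_betw \<theta>1 W Y" and b2: "bij_betw \<theta>2 W Y" and b0: "bij_betw ?\<theta>0 W Y"
    using iso_mapD(1)[OF \<theta>1] iso_mapD(1)[OF \<theta>2] iso_mapD(1)[OF ref_iso[OF \<theta>1]] vW vY by auto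
  have "?\<tau>1 \<circ> id \<in> (\<lambda>k. ?\<tau>2 \<circ> k) ` ext_auts \<Gamma> Y" using coset id_ext_auts by blast
  then obtain k where k: "k \<in> ext_auts \<Gamma> Y" "?\<tau>1 = ?\<tau>2 \<circ> k" by auto
  obtain g where g: "g \<in> Aut \<Gamma>" "\<forall>y\<in>Y. g y = k y" using k(1) unfolding ext_auts_def by blast
  have "iso_map (induced \<Gamma> Y) (induced \<Gamma> Y) k" using k(1) unfolding ext_auts_def Aut_def by blast
  then have kY: "k ` Y = Y" using iso_mapD(3) vY by metis
  have "g (\<theta>1 w) = \<theta>2 w" if w: "w \<in> W" for w
  proof -
    define y where "y = \<theta>1 w"
    have y: "y \<in> Y" and "inv_into W \<theta>1 y = w"
      using b1 w unfolding y_def bij_betw_def by (auto simp: inv_into_f_f)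
    then have t1: "?\<tau>1 y = ?\<theta>0 w" by (simp add: iso_to_aut_def)
    have ky: "k y \<in> Y" using kY y by blast
    define v where "v = inv_into W \<theta>2 (k y)"
    have v: "v \<in> W" "\<theta>2 v = k y"
      using ky b2 unfolding v_def bij_betw_def by (auto intro: inv_into_into f_inv_into_f)
    have "?\<theta>0 v = ?\<tau>2 (k y)" using ky by (simp add: iso_to_aut_def v_def)
    also have "\<dots> = ?\<theta>0 w" using fun_cong[OF k(2), of y] t1 by simp
    finally have "v = w" using b0 v(1) w unfolding bij_betw_def inj_on_def by blast
    then show ?thesis using v(2) g(2) y unfolding y_def by simp
  qed
  then show ?thesis using g(1) by blast
qed

lemma iso_map_overlap:
  assumes D: "desc_closed B D" and \<phi>: "iso_map (induced B E) \<Gamma> \<phi>" and h: "iso_map R (induced B D) h"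
  shows "iso_map (induced R {w \<in> verts R. h w \<in> E}) (induced \<Gamma> (\<phi> ` (E \<inter> D))) (\<phi> \<circ> h)"
proof -
  let ?W = "{w \<in> verts R. h w \<in> E}"
  have vR: "h ` verts R = D" using iso_mapD(3)[OF h] desc_closed_Int_verts[OF D] by simp
  then have "h ` ?W = E \<inter> D" by blast
  then have "iso_map (induced R ?W) (induced B (E \<inter> D)) h"
    using iso_map_restrict[OF h, of ?W] by (simp add: induced_induced Int_absorb2)
  moreover have "E \<inter> D \<subseteq> verts (induced B E)" using D unfolding desc_closed_def by auto
  then have "iso_map (induced B (E \<inter> D)) (induced \<Gamma> (\<phi> ` (E \<inter> D))) \<phi>"
    using iso_map_restrict[OF \<phi>] by (simp add: induced_induced Int_absorb2)
  ultimately show ?thesis by (rule iso_map_comp)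
qed

lemma iso_map_glue_along:
  assumes wf1: "wf_digraph B1" and wf2: "wf_digraph B2"
    and D1: "desc_closed B1 D1" and E1: "desc_closed B1 E1"
    and D2: "desc_closed B2 D2" and E2: "desc_closed B2 E2"
    and \<phi>1: "iso_map (induced B1 E1) \<Gamma> \<phi>1" and \<phi>2: "iso_map (induced B2 E2) \<Gamma> \<phi>2"
    and h1: "iso_map R (induced B1 D1) h1" and h2: "iso_map R (induced B2 D2) h2"
    and g: "iso_map \<Gamma> \<Gamma> g"
    and same: "\<forall>w\<in>verts R. h1 w \<in> E1 \<longleftrightarrow> h2 w \<in> E2"
    and compat: "\<forall>w\<in>verts R. h1 w \<in> E1 \<longrightarrow> g (\<phi>1 (h1 w)) = \<phi>2 (h2 w)"
  shows "\<exists>H. iso_map (induced B1 (D1 \<union> E1)) (induced B2 (D2 \<union> E2)) H \<and> (\<forall>w\<in>verts R. H (h1 w) = h2 w)"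
proof -
  define k1 where "k1 = h2 \<circ> inv_into (verts R) h1"
  define k2 where "k2 = inv_into E2 \<phi>2 \<circ> (g \<circ> \<phi>1)"
  have vE2: "verts (induced B2 E2) = E2" using desc_closed_Int_verts[OF E2] by simp
  have k1: "iso_map (induced B1 D1) (induced B2 D2) k1"
    unfolding k1_def by (rule iso_map_comp[OF iso_map_inv[OF h1] h2])
  have k2: "iso_map (induced B1 E1) (induced B2 E2) k2"
    using iso_map_comp[OF iso_map_comp[OF \<phi>1 g] iso_map_inv[OF \<phi>2]] unfolding k2_def vE2 .
  have h1R: "h1 ` verts R = D1" using iso_mapD(3)[OF h1] desc_closed_Int_verts[OF D1] by simp
  have k1h1: "k1 (h1 w) = h2 w" if "w \<in> verts R" for w
    using iso_mapD(2)[OF h1] that by (simp add: k1_def inv_into_f_f)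
  have "\<forall>x\<in>D1. x \<in> E1 \<longleftrightarrow> k1 x \<in> E2"
  proof
    fix x assume "x \<in> D1"
    then obtain w where "w \<in> verts R" "x = h1 w" using h1R by blast
    then show "x \<in> E1 \<longleftrightarrow> k1 x \<in> E2" using same k1h1 by simp
  qed
  moreover have "\<forall>x\<in>D1 \<inter> E1. k1 x = k2 x"
  proof
    fix x assume x: "x \<in> D1 \<inter> E1"
    then obtain w where w: "w \<in> verts R" "x = h1 w" using h1R by blast
    then have "h2 w \<in> E2" "g (\<phi>1 x) = \<phi>2 (h2 w)" using x same compat by auto
    then have "k2 x = h2 w"
      using iso_mapD(2)[OF \<phi>2] vE2 by (simp add: k2_def inv_into_f_f)
    then show "k1 x = k2 x" using k1h1 w by simp
  qed
  ultimately have "iso_map (induced B1 (D1 \<union> E1)) (induced B2 (D2 \<union> E2)) (override_on k2 k1 D1)"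
    by (rule iso_map_override_on[OF wf1 wf2 D1 E1 D2 E2 k1 k2])
  moreover have "\<forall>w\<in>verts R. override_on k2 k1 D1 (h1 w) = h2 w"
    using h1R k1h1 by (auto simp: override_on_def)
  ultimately show ?thesis by blast
qed

text \<open>The code of an extension \<open>e = (f, B|(D \<union> desc b))\<close>: a representative \<open>(f\<^sub>0, R)\<close> of the
  smaller extension \<open>(f, B|D)\<close>, where \<open>h\<close> witnesses the isomorphism; the overlap of \<open>D\<close> with
  \<open>desc b\<close>, seen in \<open>\<Gamma>\<close> through \<open>\<phi>\<close> (as \<open>Y\<close>) and in \<open>R\<close> through \<open>h\<close> (as \<open>W\<close>); and the coset
  recording how \<open>\<phi> \<circ> h\<close> identifies the two.\<close>
fun codes :: "'a digraph \<Rightarrow> 'c digraph \<Rightarrow> ('c \<Rightarrow> 'b) \<times> 'b digraph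
    \<Rightarrow> (('c \<Rightarrow> 'b) \<times> 'b digraph) \<times> 'a set \<times> 'b set \<times> ('a \<Rightarrow> 'a) set \<Rightarrow> bool" where
  "codes \<Gamma> A e ((f\<^sub>0, R), Y, W, Cos) \<longleftrightarrow>
     (\<exists>f B D b \<phi> h. e = (f, induced B (D \<union> desc B b)) \<and> wf_digraph B \<and> desc_closed B D
       \<and> iso_map (induced B (desc B b)) \<Gamma> \<phi> \<and> iso_map R (induced B D) h
       \<and> f\<^sub>0 ` verts A \<subseteq> verts R \<and> (\<forall>x\<in>verts A. f x = h (f\<^sub>0 x))
       \<and> Y = \<phi> ` (desc B b \<inter> D) \<and> W = {w \<in> verts R. h w \<in> desc B b}
       \<and> Cos = (\<lambda>k. iso_to_aut \<Gamma> R Y W (\<phi> \<circ> h) \<circ> k) ` ext_auts \<Gamma> Y)"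

lemma codes_unique:
  assumes "codes \<Gamma> A e1 c" and "codes \<Gamma> A e2 c"
  shows "emb_iso A e1 e2"
proof -
  obtain f\<^sub>0 R Y W Cos where c: "c = ((f\<^sub>0, R), Y, W, Cos)" by (metis prod.exhaust)
  obtain f1 B1 D1 b1 \<phi>1 h1 where e1: "e1 = (f1, induced B1 (D1 \<union> desc B1 b1))" "wf_digraph B1"
    "desc_closed B1 D1" "iso_map (induced B1 (desc B1 b1)) \<Gamma> \<phi>1" "iso_map R (induced B1 D1) h1"
    "f\<^sub>0 ` verts A \<subseteq> verts R" "\<forall>x\<in>verts A. f1 x = h1 (f\<^sub>0 x)"
    "Y = \<phi>1 ` (desc B1 b1 \<inter> D1)" "W = {w \<in> verts R. h1 w \<in> desc B1 b1}"
    "Cos = (\<lambda>k. iso_to_aut \<Gamma> R Y W (\<phi>1 \<circ> h1) \<circ> k) ` ext_auts \<Gamma> Y"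
    using assms(1) unfolding c codes.simps by blast
  obtain f2 B2 D2 b2 \<phi>2 h2 where e2: "e2 = (f2, induced B2 (D2 \<union> desc B2 b2))" "wf_digraph B2"
    "desc_closed B2 D2" "iso_map (induced B2 (desc B2 b2)) \<Gamma> \<phi>2" "iso_map R (induced B2 D2) h2"
    "\<forall>x\<in>verts A. f2 x = h2 (f\<^sub>0 x)"
    "Y = \<phi>2 ` (desc B2 b2 \<inter> D2)" "W = {w \<in> verts R. h2 w \<in> desc B2 b2}"
    "Cos = (\<lambda>k. iso_to_aut \<Gamma> R Y W (\<phi>2 \<circ> h2) \<circ> k) ` ext_auts \<Gamma> Y"
    using assms(2) unfolding c codes.simps by blast
  have Y: "Y \<subseteq> verts \<Gamma>" using e1(8) iso_mapD(3)[OF e1(4)] desc_subset_verts by fastforce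
  have \<theta>1: "iso_map (induced R W) (induced \<Gamma> Y) (\<phi>1 \<circ> h1)"
    using iso_map_overlap[OF e1(3,4,5)] unfolding e1(8,9)[symmetric] .
  have \<theta>2: "iso_map (induced R W) (induced \<Gamma> Y) (\<phi>2 \<circ> h2)"
    using iso_map_overlap[OF e2(3,4,5)] unfolding e2(7,8)[symmetric] .
  obtain g where g: "g \<in> Aut \<Gamma>" "\<forall>w\<in>W. g ((\<phi>1 \<circ> h1) w) = (\<phi>2 \<circ> h2) w"
    using iso_to_aut_coset_eq[OF \<theta>1 \<theta>2 _ Y] e1(9,10) e2(9) by auto
  have "\<forall>w\<in>verts R. h1 w \<in> desc B1 b1 \<longleftrightarrow> h2 w \<in> desc B2 b2" using e1(9) e2(8) by blast
  moreover have "\<forall>w\<in>verts R. h1 w \<in> desc B1 b1 \<longrightarrow> g (\<phi>1 (h1 w)) = \<phi>2 (h2 w)"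
    using g(2) e1(9) by auto
  moreover have "iso_map \<Gamma> \<Gamma> g" using g(1) unfolding Aut_def by blast
  ultimately obtain H where H:
    "iso_map (induced B1 (D1 \<union> desc B1 b1)) (induced B2 (D2 \<union> desc B2 b2)) H"
    "\<forall>w\<in>verts R. H (h1 w) = h2 w"
    using iso_map_glue_along[OF e1(2) e2(2) e1(3) desc_closed_desc[OF e1(2)] e2(3)
        desc_closed_desc[OF e2(2)] e1(4) e2(4) e1(5) e2(5)] by blast
  have "\<forall>x\<in>verts A. f2 x = H (f1 x)" using H(2) e1(6,7) e2(6) by auto
  then show ?thesis unfolding emb_iso_def using H(1) e1(1) e2(1) by auto
qed

definition embs_with_gens :: "'a digraph \<Rightarrow> 'c digraph \<Rightarrow> nat \<Rightarrow> (('c \<Rightarrow> 'b) \<times> 'b digraph) set" where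
  "embs_with_gens \<Gamma> A k = {(f, induced B (f ` verts A \<union> desc_set B Z)) | f B Z.
      in_C \<Gamma> B \<and> le_embedding f A B \<and> finite Z \<and> card Z = k \<and> Z \<subseteq> verts B}"

lemma embs_with_gensD:
  assumes "e \<in> embs_with_gens \<Gamma> A k"
  shows "countable (verts \<Gamma>) \<Longrightarrow> countable (verts (snd e))" and "fst e ` verts A \<subseteq> verts (snd e)"
proof -
  obtain f B Z where e: "e = (f, induced B (f ` verts A \<union> desc_set B Z))" "in_C \<Gamma> B"
    "le_embedding f A B"
    using assms unfolding embs_with_gens_def by blast
  show "countable (verts (snd e))" if "countable (verts \<Gamma>)"
    using countable_verts_in_C[OF that e(2)] e(1) by (simp add: countable_subset[of _ "verts B"])
  show "fst e ` verts A \<subseteq> verts (snd e)" using e(1,3) unfolding le_embedding_def by auto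
qed

lemma in_embs_with_gens:
  assumes B: "in_C \<Gamma> B" and f: "le_embedding f A B"
  shows "\<exists>k. (f, B) \<in> embs_with_gens \<Gamma> A k"
proof -
  obtain Z where Z: "finite Z" "Z \<subseteq> verts B" "verts B = desc_set B Z"
    using B unfolding in_C_def fg_digraph_def fg_set_def by blast
  have "f ` verts A \<subseteq> verts B" using f unfolding le_embedding_def by blast
  then have "f ` verts A \<union> desc_set B Z = verts B" using Z(3) by blast
  moreover have "wf_digraph B" using B unfolding in_C_def by blast
  ultimately have "induced B (f ` verts A \<union> desc_set B Z) = B" by (simp add: induced_self)
  moreover have "(f, induced B (f ` verts A \<union> desc_set B Z)) \<in> embs_with_gens \<Gamma> A (card Z)"
    unfolding embs_with_gens_def using B f Z(1,2) by blast
  ultimately show ?thesis by auto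
qed

lemma embs_with_gens_0:
  assumes "e1 \<in> embs_with_gens \<Gamma> A 0" "e2 \<in> embs_with_gens \<Gamma> A 0"
  shows "emb_iso A e1 e2"
proof -
  obtain f1 B1 where e1: "e1 = (f1, induced B1 (f1 ` verts A))" "le_embedding f1 A B1"
    using assms(1) unfolding embs_with_gens_def by (auto simp: desc_set_def)
  obtain f2 B2 where e2: "e2 = (f2, induced B2 (f2 ` verts A))" "le_embedding f2 A B2"
    using assms(2) unfolding embs_with_gens_def by (auto simp: desc_set_def)
  have i1: "iso_map A (induced B1 (f1 ` verts A)) f1" by (rule le_embedding_iso_map[OF e1(2)])
  have i2: "iso_map A (induced B2 (f2 ` verts A)) f2" by (rule le_embedding_iso_map[OF e2(2)])
  have "iso_map (induced B1 (f1 ` verts A)) (induced B2 (f2 ` verts A)) (f2 \<circ> inv_into (verts A) f1)"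
    by (rule iso_map_comp[OF iso_map_inv[OF i1] i2])
  moreover have "\<forall>x\<in>verts A. f2 x = (f2 \<circ> inv_into (verts A) f1) (f1 x)"
    using iso_mapD(2)[OF i1] by (simp add: inv_into_f_f)
  ultimately show ?thesis unfolding emb_iso_def e1(1) e2(1) by auto
qed

lemma embs_with_gens_SucE:
  assumes e: "e \<in> embs_with_gens \<Gamma> A (Suc k)" and A: "in_C \<Gamma> A"
  obtains f B D b where "e = (f, induced B (D \<union> desc B b))" "(f, induced B D) \<in> embs_with_gens \<Gamma> A k"
    "in_C \<Gamma> B" "b \<in> verts B" "fg_set B D"
proof -
  obtain f B Z where d: "e = (f, induced B (f ` verts A \<union> desc_set B Z))" "in_C \<Gamma> B"
    "le_embedding f A B" "finite Z" "card Z = Suc k" "Z \<subseteq> verts B"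
    using e unfolding embs_with_gens_def by blast
  obtain b where b: "b \<in> Z" using d(5) by (auto simp: card_Suc_eq)
  define D where "D = f ` verts A \<union> desc_set B (Z - {b})"
  have "Z = insert b (Z - {b})" using b by blast
  then have "desc_set B Z = desc B b \<union> desc_set B (Z - {b})" by (metis desc_set_insert)
  then have "e = (f, induced B (D \<union> desc B b))" using d(1) unfolding D_def by (simp add: Un_ac)
  moreover have "card (Z - {b}) = k" "finite (Z - {b})" "Z - {b} \<subseteq> verts B" using d(4,5,6) b by auto
  then have "(f, induced B D) \<in> embs_with_gens \<Gamma> A k"
    unfolding embs_with_gens_def D_def using d(2,3) by blast
  moreover have "fg_set B D"
    using fg_set_UN[of "{f ` verts A, desc_set B (Z - {b})}" B id]
      fg_set_le_embedding_image[OF A d(3)] fg_set_desc_set[of "Z - {b}" B] d(4,6)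
    unfolding D_def by auto
  ultimately show ?thesis using that d(2,6) b by blast
qed

lemma codes_exist:
  assumes A: "in_C \<Gamma> A" and e: "e \<in> embs_with_gens \<Gamma> A (Suc k)"
    and Rk: "Rk \<subseteq> embs_with_gens \<Gamma> A k" and reps: "\<forall>e\<in>embs_with_gens \<Gamma> A k. \<exists>r\<in>Rk. emb_iso A r e"
  shows "\<exists>r\<in>Rk. \<exists>Y\<in>{Y. fg_set \<Gamma> Y}. \<exists>W\<in>{W. fg_set (snd r) W}.
           \<exists>Cos\<in>left_cosets (induced \<Gamma> Y) (ext_auts \<Gamma> Y). codes \<Gamma> A e (r, Y, W, Cos)"
proof -
  obtain f B D b where d: "e = (f, induced B (D \<union> desc B b))"
    "(f, induced B D) \<in> embs_with_gens \<Gamma> A k" "in_C \<Gamma> B" "b \<in> verts B" "fg_set B D"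
    using embs_with_gens_SucE[OF e A] by blast
  obtain f\<^sub>0 R where r: "(f\<^sub>0, R) \<in> Rk" "emb_iso A (f\<^sub>0, R) (f, induced B D)"
    using reps d(2) by (metis prod.exhaust)
  obtain h where h: "iso_map R (induced B D) h" "\<forall>x\<in>verts A. f x = h (f\<^sub>0 x)"
    using r(2) unfolding emb_iso_def by auto
  have f\<^sub>0: "f\<^sub>0 ` verts A \<subseteq> verts R" using embs_with_gensD(2) r(1) Rk by fastforce
  have wf: "wf_digraph B" using d(3) unfolding in_C_def by blast
  have D: "desc_closed B D" by (rule fg_set_desc_closed[OF wf d(5)])
  obtain \<phi> where \<phi>: "iso_map (induced B (desc B b)) \<Gamma> \<phi>"
    using d(3,4) unfolding in_C_def isomorphic_def by blast
  define Y where "Y = \<phi> ` (desc B b \<inter> D)"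
  define W where "W = {w \<in> verts R. h w \<in> desc B b}"
  define Cos where "Cos = (\<lambda>k. iso_to_aut \<Gamma> R Y W (\<phi> \<circ> h) \<circ> k) ` ext_auts \<Gamma> Y"
  have Y_fg: "fg_set \<Gamma> Y" and W_fg: "fg_set R W"
    unfolding Y_def W_def by (rule fg_set_overlap[OF d(3,4,5) \<phi> h(1)])+
  have "iso_map (induced R W) (induced \<Gamma> Y) (\<phi> \<circ> h)"
    unfolding Y_def W_def by (rule iso_map_overlap[OF D \<phi> h(1)])
  then have "Cos \<in> left_cosets (induced \<Gamma> Y) (ext_auts \<Gamma> Y)"
    unfolding Cos_def by (rule iso_to_aut_left_coset) (use W_fg Y_fg fg_set_subset_verts in auto)
  moreover have "codes \<Gamma> A e ((f\<^sub>0, R), Y, W, Cos)"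
    unfolding codes.simps
    by (intro exI[of _ f] exI[of _ B] exI[of _ D] exI[of _ b] exI[of _ \<phi>] exI[of _ h] conjI)
      (use d(1) wf D \<phi> h f\<^sub>0 in \<open>simp_all add: Y_def W_def Cos_def\<close>)
  ultimately show ?thesis using r(1) Y_fg W_fg
    by (intro bexI[of _ "(f\<^sub>0, R)"] bexI[of _ Y] bexI[of _ W] bexI[of _ Cos]) simp_all
qed

definition countable_reps :: "('e \<Rightarrow> 'e \<Rightarrow> bool) \<Rightarrow> 'e set \<Rightarrow> bool" where
  "countable_reps rel S \<longleftrightarrow> (\<exists>R. countable R \<and> R \<subseteq> S \<and> (\<forall>e\<in>S. \<exists>r\<in>R. rel r e))"

lemma countable_repsI:
  assumes CS: "countable CS" and code: "\<forall>e\<in>S. \<exists>c\<in>CS. P e c"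
    and unique: "\<And>e1 e2 c. e1 \<in> S \<Longrightarrow> e2 \<in> S \<Longrightarrow> c \<in> CS \<Longrightarrow> P e1 c \<Longrightarrow> P e2 c \<Longrightarrow> rel e1 e2"
  shows "countable_reps rel S"
proof -
  let ?C = "{c \<in> CS. \<exists>e\<in>S. P e c}"
  let ?rep = "\<lambda>c. SOME e. e \<in> S \<and> P e c"
  have rep: "?rep c \<in> S \<and> P (?rep c) c" if "c \<in> ?C" for c
    using that someI_ex[of "\<lambda>e. e \<in> S \<and> P e c"] by blast
  have "countable ?C" by (rule countable_subset[OF _ CS]) blast
  then have "countable (?rep ` ?C)" by (rule countable_image)
  moreover have "\<forall>e\<in>S. \<exists>r\<in>?rep ` ?C. rel r e"
  proof
    fix e assume e: "e \<in> S"
    then obtain c where c: "c \<in> CS" "P e c" using code by blast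
    then have C: "c \<in> ?C" using e by blast
    then have "rel (?rep c) e" using rep unique[OF _ e c(1)] c(2) by blast
    then show "\<exists>r\<in>?rep ` ?C. rel r e" using C by blast
  qed
  moreover have "?rep ` ?C \<subseteq> S" using rep by blast
  ultimately show ?thesis unfolding countable_reps_def by blast
qed

lemma countable_reps_UN:
  assumes I: "countable I" and S: "\<And>i. i \<in> I \<Longrightarrow> countable_reps rel (S i)"
  shows "countable_reps rel (\<Union>i\<in>I. S i)"
proof -
  have "\<forall>i\<in>I. \<exists>R. countable R \<and> R \<subseteq> S i \<and> (\<forall>e\<in>S i. \<exists>r\<in>R. rel r e)"
    using S unfolding countable_reps_def by blast
  then obtain R where R: "\<forall>i\<in>I. countable (R i) \<and> R i \<subseteq> S i \<and> (\<forall>e\<in>S i. \<exists>r\<in>R i. rel r e)"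
    by (rule bchoice[THEN exE])
  have "countable (\<Union>i\<in>I. R i)" by (rule countable_UN[OF I]) (use R in blast)
  moreover have "(\<Union>i\<in>I. R i) \<subseteq> (\<Union>i\<in>I. S i)" using R by blast
  moreover have "\<forall>e\<in>(\<Union>i\<in>I. S i). \<exists>r\<in>(\<Union>i\<in>I. R i). rel r e"
  proof
    fix e assume "e \<in> (\<Union>i\<in>I. S i)"
    then obtain i where i: "i \<in> I" "e \<in> S i" by blast
    then obtain r where "r \<in> R i" "rel r e" using R by blast
    then show "\<exists>r\<in>(\<Union>i\<in>I. R i). rel r e" using i(1) by blast
  qed
  ultimately show ?thesis unfolding countable_reps_def by blast
qed

lemma countable_reps_subset:
  assumes T: "countable_reps rel T" and ST: "S \<subseteq> T"
    and rel: "\<And>r e1 e2. r \<in> T \<Longrightarrow> e1 \<in> S \<Longrightarrow> e2 \<in> S \<Longrightarrow> rel r e1 \<Longrightarrow> rel r e2 \<Longrightarrow> rel e1 e2"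
  shows "countable_reps rel S"
proof -
  obtain R where R: "countable R" "R \<subseteq> T" "\<forall>e\<in>T. \<exists>r\<in>R. rel r e"
    using T unfolding countable_reps_def by blast
  show ?thesis
  proof (rule countable_repsI[OF R(1), of S "\<lambda>e r. rel r e"])
    show "\<forall>e\<in>S. \<exists>r\<in>R. rel r e" using R(3) ST by blast
    show "rel e1 e2" if "e1 \<in> S" "e2 \<in> S" "r \<in> R" "rel r e1" "rel r e2" for e1 e2 r
      using rel that R(2) by blast
  qed
qed

lemma countable_reps_embs_with_gens_Suc:
  assumes wf: "wf_digraph \<Gamma>" and cnt: "countable (verts \<Gamma>)"
    and C2: "\<forall>X. desc_closed \<Gamma> X \<and> fg_set \<Gamma> X \<longrightarrow>
               countable (left_cosets (induced \<Gamma> X) (ext_auts \<Gamma> X))"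
    and A: "in_C \<Gamma> A"
    and IH: "countable_reps (emb_iso A) (embs_with_gens \<Gamma> A k :: (('c \<Rightarrow> 'b) \<times> 'b digraph) set)"
  shows "countable_reps (emb_iso A) (embs_with_gens \<Gamma> A (Suc k) :: (('c \<Rightarrow> 'b) \<times> 'b digraph) set)"
proof -
  obtain Rk :: "(('c \<Rightarrow> 'b) \<times> 'b digraph) set" where Rk: "countable Rk" "Rk \<subseteq> embs_with_gens \<Gamma> A k"
    "\<forall>e\<in>embs_with_gens \<Gamma> A k. \<exists>r\<in>Rk. emb_iso A r e"
    using IH unfolding countable_reps_def by blast
  let ?CS = "SIGMA r:Rk. SIGMA Y:{Y. fg_set \<Gamma> Y}. SIGMA W:{W. fg_set (snd r) W}.
               left_cosets (induced \<Gamma> Y) (ext_auts \<Gamma> Y)"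
  have "countable ?CS"
  proof (intro countable_SIGMA Rk(1) countable_fg_sets cnt)
    fix r Y assume "r \<in> Rk" "Y \<in> {Y. fg_set \<Gamma> Y}"
    then show "countable (verts (snd r))" "countable (left_cosets (induced \<Gamma> Y) (ext_auts \<Gamma> Y))"
      using embs_with_gensD(1)[OF _ cnt] Rk(2) C2 fg_set_desc_closed[OF wf] by blast+
  qed
  moreover have "\<forall>e\<in>embs_with_gens \<Gamma> A (Suc k). \<exists>c\<in>?CS. codes \<Gamma> A e c"
    using codes_exist[OF A _ Rk(2,3)] by fast
  ultimately show ?thesis using codes_unique by (rule countable_repsI)
qed

theorem lemma4p2:
  fixes \<Gamma> :: "'a digraph" and A :: "'c digraph"
  assumes wf: "wf_digraph \<Gamma>"
    and cnt: "countable (verts \<Gamma>)"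
    and C1: "\<forall>u\<in>verts \<Gamma>. isomorphic (induced \<Gamma> (desc \<Gamma> u)) \<Gamma>"
    and C2: "\<forall>X. desc_closed \<Gamma> X \<and> fg_set \<Gamma> X \<longrightarrow>
               countable (left_cosets (induced \<Gamma> X) (ext_auts \<Gamma> X))"
    and A: "in_C \<Gamma> A"
  shows "\<exists>R :: (('c \<Rightarrow> 'b) \<times> 'b digraph) set. countable R
           \<and> (\<forall>e\<in>R. in_C \<Gamma> (snd e) \<and> le_embedding (fst e) A (snd e))
           \<and> (\<forall>f B. in_C \<Gamma> B \<and> le_embedding f A B \<longrightarrow> (\<exists>e\<in>R. emb_iso A e (f, B)))"
proof -
  let ?E = "embs_with_gens \<Gamma> A :: nat \<Rightarrow> (('c \<Rightarrow> 'b) \<times> 'b digraph) set"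
  have "countable_reps (emb_iso A) (?E k)" for k
  proof (induction k)
    case 0
    show ?case by (rule countable_repsI[of "{()}" _ "\<lambda>_ _. True"]) (auto intro: embs_with_gens_0)
  next
    case (Suc k)
    then show ?case by (rule countable_reps_embs_with_gens_Suc[OF wf cnt C2 A])
  qed
  then have "countable_reps (emb_iso A) (\<Union>k\<in>UNIV. ?E k)" by (intro countable_reps_UN) auto
  then have "countable_reps (emb_iso A)
      {e :: ('c \<Rightarrow> 'b) \<times> 'b digraph. in_C \<Gamma> (snd e) \<and> le_embedding (fst e) A (snd e)}"
  proof (rule countable_reps_subset)
    show "{e. in_C \<Gamma> (snd e) \<and> le_embedding (fst e) A (snd e)} \<subseteq> (\<Union>k\<in>UNIV. ?E k)"
      using in_embs_with_gens by fastforce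
    show "emb_iso A e1 e2" if "r \<in> (\<Union>k\<in>UNIV. ?E k)" "emb_iso A r e1" "emb_iso A r e2" for r e1 e2
      using that emb_iso_sym emb_iso_trans embs_with_gensD(2) by blast
  qed
  then show ?thesis unfolding countable_reps_def by force
qed

end
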